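(* Let $k\ge4$. For each even natural number $v$ let $\Delta_v$ denote the unique positive solution of $\Delta_v e^{\Delta_v/k}=ke^{1-v/k}$, and put $\tau(k)=\max_{w\in\mathbb N}(k-2\Delta_{2w})/(4w^2)$. Then \[ \tau(k)\ge\frac{1}{9.027901\,k}\qquad\text{and}\qquad \tau(k)\ge\frac{1-2/\omega}{(1-1/\omega+\log\omega+2/k)^2\,k}, \] where $\omega$ is the unique real solution with $\omega\ge1$ of $\omega-2-1/\omega=\log\omega$.
   Context: $\log$ denotes the natural logarithm. (For even $v$ and $k\ge4$, the numbers $\Delta_v$ defined here are admissible exponents for $k$ in the sense of mean values of smooth Weyl sums, so $\tau(k)$ is the quantity entering the minor arc bounds; the claim itself concerns only the numbers so defined.) *)

theory Defs
  imports Complex_Main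
begin

definition Delta :: "nat \<Rightarrow> nat \<Rightarrow> real" where
  "Delta k v = (THE D. D > 0 \<and> D * exp (D / real k) = real k * exp (1 - real v / real k))"

definition tau :: "nat \<Rightarrow> real" where
  "tau k = Sup {(real k - 2 * Delta k (2 * w)) / (4 * (real w)^2) | w. w \<ge> 1}"

definition omega :: real where
  "omega = (THE w. w \<ge> 1 \<and> w - 2 - 1 / w = ln w)"

end

theory Submission
  imports Defs
begin

text \<open>
  The map \<open>D \<mapsto> D e\<^bsup>D/k\<^esup>\<close> is strictly increasing on \<open>(0,\<infinity>)\<close>, so \<open>\<Delta>\<^sub>v \<le> B\<close> as soon as
  \<open>B e\<^bsup>B/k\<^esup> \<ge> k e\<^bsup>1-v/k\<^esup>\<close>, and every such \<open>B\<close> yields the lower bound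
  \<open>(k - 2B)/(4w\<^sup>2)\<close> for \<open>\<tau>(k)\<close> with \<open>v = 2w\<close>.
  For the first bound take \<open>w = k\<close> and \<open>B = x\<^sub>0 k\<close>, where \<open>x\<^sub>0 e\<^bsup>x\<^sub>0\<^esup> \<ge> e\<^sup>-\<^sup>1\<close> is checked with a
  Taylor polynomial of \<open>exp\<close>. For the second take \<open>B = k/\<omega>\<close> and \<open>w = \<lceil>kL/2\<rceil>\<close> with
  \<open>L = 1 - 1/\<omega> + log \<omega>\<close>, which is exactly the choice making \<open>B e\<^bsup>B/k\<^esup> = k e\<^bsup>1-L\<^esup>\<close>;
  this works for any \<open>\<omega> > 2\<close>, while for \<open>\<omega> \<le> 2\<close> the bound is nonpositive.
\<close>

lemma exp_partial_sum_le:
  assumes "0 \<le> (x::real)"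
  shows "(\<Sum>n<N. x ^ n / fact n) \<le> exp x"
proof -
  have series: "(\<lambda>n. x ^ n /\<^sub>R fact n) sums exp x"
    by (rule exp_converges)
  have "(\<Sum>n<N. x ^ n /\<^sub>R fact n) \<le> (\<Sum>n. x ^ n /\<^sub>R fact n)"
    by (rule sum_le_suminf) (use series assms in \<open>auto simp: sums_iff\<close>)
  with series show ?thesis
    by (simp add: sums_iff divide_inverse mult.commute)
qed

lemma the_strict_mono_on_eq:
  fixes f :: "'a::linorder \<Rightarrow> 'b::preorder"
  assumes "strict_mono_on S f" "x \<in> S" "f x = y"
  shows "(THE z. z \<in> S \<and> f z = y) = x"
  using assms strict_mono_on_eq[OF assms(1)] by (intro the_equality) auto

lemma strict_mono_on_mult_exp_divide:
  assumes "0 < (c::real)"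
  shows "strict_mono_on {0<..} (\<lambda>D. D * exp (D / c))"
proof (rule strict_mono_onI)
  fix a b :: real
  assume "a \<in> {0<..}" "a < b"
  moreover have "exp (a / c) \<le> exp (b / c)"
    using \<open>a < b\<close> assms by (simp add: divide_right_mono)
  ultimately show "a * exp (a / c) < b * exp (b / c)"
    by (intro mult_strict_right_mono[THEN order.strict_trans2]) auto
qed

lemma Delta_pos_and_eq:
  assumes "k > 0"
  shows "Delta k v > 0 \<and> Delta k v * exp (Delta k v / real k) = real k * exp (1 - real v / real k)"
proof -
  define f where "f = (\<lambda>D. D * exp (D / real k))"
  define y where "y = real k * exp (1 - real v / real k)"
  have k: "real k > 0"
    using assms by simp
  have "y \<le> real k * exp 1"
    using k by (simp add: y_def)
  also have "\<dots> \<le> f (real k * exp 1)"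
    using k by (simp add: f_def)
  finally have "y \<le> f (real k * exp 1)" .
  moreover have "f 0 \<le> y"
    using k by (simp add: f_def y_def)
  ultimately obtain x where "0 \<le> x" "f x = y"
    using IVT[of f 0 y "real k * exp 1"] k by (auto simp: f_def intro!: continuous_intros)
  moreover have "y > 0"
    using k by (simp add: y_def)
  ultimately have x: "x \<in> {0<..}" "f x = y"
    by (auto simp: f_def less_eq_real_def)
  have "Delta k v = (THE z. z \<in> {0<..} \<and> f z = y)"
    by (simp add: Delta_def f_def y_def)
  also have "\<dots> = x"
    using strict_mono_on_mult_exp_divide[OF k, folded f_def] x by (rule the_strict_mono_on_eq)
  finally show ?thesis
    using x by (simp add: f_def y_def)
qed

lemma Delta_le:
  assumes "k > 0" "B > 0" "real k * exp (1 - real v / real k) \<le> B * exp (B / real k)"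
  shows "Delta k v \<le> B"
  using strict_mono_on_less_eq[OF strict_mono_on_mult_exp_divide, of "real k" "Delta k v" B]
    Delta_pos_and_eq[OF assms(1), of v] assms by simp

lemma tau_ge:
  assumes "k > 0" "w \<ge> 1"
  shows "(real k - 2 * Delta k (2 * w)) / (4 * (real w)\<^sup>2) \<le> tau k"
proof -
  have "bdd_above {(real k - 2 * Delta k (2 * w)) / (4 * (real w)\<^sup>2) | w. w \<ge> 1}"
  proof (rule bdd_aboveI)
    fix s
    assume "s \<in> {(real k - 2 * Delta k (2 * w)) / (4 * (real w)\<^sup>2) | w. w \<ge> 1}"
    then obtain u where u: "u \<ge> 1" "s = (real k - 2 * Delta k (2 * u)) / (4 * (real u)\<^sup>2)"
      by blast
    have "s \<le> real k / (4 * (real u)\<^sup>2)"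
      unfolding u(2) using Delta_pos_and_eq[OF assms(1), of "2 * u"]
      by (intro divide_right_mono) auto
    also have "\<dots> \<le> real k / 4"
      using u(1) by (intro divide_left_mono) auto
    finally show "s \<le> real k / 4" .
  qed
  then show ?thesis
    unfolding tau_def using assms(2) by (intro cSup_upper) auto
qed

lemma tau_ge_of_exp_bound:
  assumes "k > 0" "w \<ge> 1" "B > 0"
    and "real k * exp (1 - 2 * real w / real k) \<le> B * exp (B / real k)"
  shows "(real k - 2 * B) / (4 * (real w)\<^sup>2) \<le> tau k"
proof -
  have "Delta k (2 * w) \<le> B"
    using assms by (intro Delta_le) auto
  then have "(real k - 2 * B) / (4 * (real w)\<^sup>2) \<le> (real k - 2 * Delta k (2 * w)) / (4 * (real w)\<^sup>2)"
    by (intro divide_right_mono) auto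
  also have "\<dots> \<le> tau k"
    using assms(1,2) by (rule tau_ge)
  finally show ?thesis .
qed

lemma exp_partial_sum_14_eq:
  "(\<Sum>n<14. (x::real) ^ n / fact n) = 1 + x + x^2/2 + x^3/6 + x^4/24 + x^5/120 + x^6/720
     + x^7/5040 + x^8/40320 + x^9/362880 + x^10/3628800 + x^11/39916800 + x^12/479001600
     + x^13/6227020800"
  by (simp add: eval_nat_numeral lessThan_Suc fact_numeral)

lemma exp_minus_one_le:
  "exp (-1) \<le> 5027901/18055802 * exp (5027901/18055802 :: real)"
proof -
  \<comment> \<open>\<open>x\<^sub>0 = (1 - 4/9.027901)/2\<close>; the Taylor sum is evaluated at a rational just below \<open>1 + x\<^sub>0\<close>.\<close>
  define x0 :: real where "x0 = 5027901/18055802"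
  have "1 / x0 \<le> (\<Sum>n<14. (127846456/10^8::real) ^ n / fact n)"
    unfolding exp_partial_sum_14_eq x0_def by (simp add: power_divide)
  also have "\<dots> \<le> exp (127846456/10^8)"
    by (rule exp_partial_sum_le) simp
  also have "\<dots> \<le> exp (1 + x0)"
    by (simp add: x0_def)
  also have "\<dots> = exp 1 * exp x0"
    by (rule exp_add)
  finally have "1 \<le> x0 * (exp 1 * exp x0)"
    by (simp add: x0_def field_simps)
  then show ?thesis
    unfolding x0_def[symmetric] by (simp add: exp_minus field_simps)
qed

lemma tau_ge_first_bound:
  assumes "k > 0"
  shows "1 / (9.027901 * real k) \<le> tau k"
proof -
  define x0 :: real where "x0 = 5027901/18055802"
  have "1 / (9.027901 * real k) = (real k - 2 * (real k * x0)) / (4 * (real k)\<^sup>2)"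
    using assms by (simp add: x0_def field_simps power2_eq_square)
  also have "\<dots> \<le> tau k"
  proof (rule tau_ge_of_exp_bound)
    have "real k * exp (1 - 2 * real k / real k) = real k * exp (-1)"
      using assms by simp
    also have "\<dots> \<le> real k * x0 * exp (real k * x0 / real k)"
      using assms exp_minus_one_le by (simp add: x0_def)
    finally show "real k * exp (1 - 2 * real k / real k) \<le> real k * x0 * exp (real k * x0 / real k)" .
  qed (use assms in \<open>auto simp: x0_def\<close>)
  finally show ?thesis .
qed

lemma tau_ge_second_bound:
  assumes "k > 0" "y > 2"
  shows "(1 - 2 / y) / ((1 - 1 / y + ln y + 2 / real k)\<^sup>2 * real k) \<le> tau k"
proof -
  define L where "L = 1 - 1 / y + ln y"
  define w where "w = nat \<lceil>real k * L / 2\<rceil>"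
  have k: "real k > 0"
    using assms by simp
  have "1 / y < 1" "0 < ln y"
    using assms(2) by auto
  then have "L > 0"
    by (simp add: L_def)
  then have kL: "real k * L / 2 > 0"
    using k by simp
  have "real w = of_int \<lceil>real k * L / 2\<rceil>"
    using kL by (simp add: w_def)
  then have w_lower: "real k * L / 2 \<le> real w" and w_upper: "2 * real w \<le> real k * L + 2"
    using le_of_int_ceiling[of "real k * L / 2"] of_int_ceiling_le_add_one[of "real k * L / 2"]
    by linarith+
  have w: "w \<ge> 1"
    using w_lower kL by simp
  have denom: "real k * ((L + 2 / real k)\<^sup>2 * real k) = (real k * L + 2)\<^sup>2"
    using k by (simp add: field_simps power2_eq_square)
  have numer: "real k * (1 - 2 / y) = real k - 2 * (real k / y)"
    by (simp add: algebra_simps)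
  have "(1 - 2 / y) / ((L + 2 / real k)\<^sup>2 * real k)
      = real k * (1 - 2 / y) / (real k * ((L + 2 / real k)\<^sup>2 * real k))"
    using k by simp
  also have "\<dots> = (real k - 2 * (real k / y)) / (real k * L + 2)\<^sup>2"
    unfolding numer denom ..
  also have "\<dots> \<le> (real k - 2 * (real k / y)) / (4 * (real w)\<^sup>2)"
  proof (rule divide_left_mono)
    show "4 * (real w)\<^sup>2 \<le> (real k * L + 2)\<^sup>2"
      using power_mono[OF w_upper, of 2] by (simp add: power_mult_distrib)
    show "0 \<le> real k - 2 * (real k / y)"
      using assms(2) k by (simp add: field_simps)
  qed (use w kL in \<open>auto intro!: mult_pos_pos\<close>)
  also have "\<dots> \<le> tau k"
  proof (rule tau_ge_of_exp_bound[OF assms(1) w])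
    have "L \<le> 2 * real w / real k"
      using w_lower k by (simp add: field_simps)
    then have "exp (1 - 2 * real w / real k) \<le> exp (1 / y - ln y)"
      by (simp add: L_def)
    also have "\<dots> = 1 / y * exp (1 / y)"
      using assms(2) by (simp add: exp_diff)
    finally have "real k * exp (1 - 2 * real w / real k) \<le> real k * (1 / y * exp (1 / y))"
      using k by (intro mult_left_mono) auto
    also have "\<dots> = real k / y * exp (real k / y / real k)"
      using k by simp
    finally show "real k * exp (1 - 2 * real w / real k) \<le> real k / y * exp (real k / y / real k)" .
  qed (use assms(2) k in auto)
  finally show ?thesis
    unfolding L_def .
qed

lemma omega_ge_1: "omega \<ge> 1"
proof -
  define g where "g = (\<lambda>w::real. w - 2 - 1 / w - ln w)"
  have "strict_mono_on {1..} g"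
  proof (rule strict_mono_onI)
    fix a b :: real
    assume a: "a \<in> {1..}" and "a < b"
    have "ln b - ln a = ln (b / a)"
      using a \<open>a < b\<close> by (simp add: ln_div)
    also have "\<dots> \<le> b / a - 1"
      using a \<open>a < b\<close> by (intro ln_le_minus_one) auto
    also have "\<dots> = (b - a) / a"
      using a by (simp add: field_simps)
    also have "\<dots> \<le> b - a"
      using a \<open>a < b\<close> by (simp add: divide_le_eq)
    finally have "ln b - ln a \<le> b - a" .
    moreover have "1 / b < 1 / a"
      using a \<open>a < b\<close> by (simp add: frac_less2)
    ultimately show "g a < g b"
      by (simp add: g_def)
  qed
  have "(8::real) \<le> (\<Sum>n<4. 3 ^ n / fact n)"
    by (simp add: eval_nat_numeral lessThan_Suc fact_numeral)
  also have "\<dots> \<le> exp 3"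
    by (rule exp_partial_sum_le) simp
  finally have "ln (8::real) \<le> 3"
    using ln_le_cancel_iff[of 8 "exp 3"] by simp
  then have "g 1 \<le> 0" "0 \<le> g 8"
    by (simp_all add: g_def)
  then have "\<exists>x\<ge>1. x \<le> 8 \<and> g x = 0"
    by (intro IVT) (auto simp: g_def intro!: continuous_intros)
  then obtain x where x: "x \<in> {1..}" "g x = 0"
    by auto
  have "omega = (THE w. w \<in> {1..} \<and> g w = 0)"
    unfolding omega_def g_def by (rule arg_cong[where f = The], intro ext) auto
  also have "\<dots> = x"
    by (rule the_strict_mono_on_eq) fact+
  finally show ?thesis
    using x by simp
qed

theorem lemma7p1:
  fixes k :: nat
  assumes "k \<ge> 4"
  shows "tau k \<ge> 1 / (9.027901 * real k) \<and>
         tau k \<ge> (1 - 2 / omega) / ((1 - 1 / omega + ln omega + 2 / real k)^2 * real k)"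
proof -
  have k: "k > 0"
    using assms by simp
  have first: "1 / (9.027901 * real k) \<le> tau k"
    using k by (rule tau_ge_first_bound)
  have "(1 - 2 / omega) / ((1 - 1 / omega + ln omega + 2 / real k)^2 * real k) \<le> tau k"
  proof (cases "omega > 2")
    case True
    with k show ?thesis
      by (rule tau_ge_second_bound)
  next
    case False
    then have "1 - 2 / omega \<le> 0"
      using omega_ge_1 by (simp add: field_simps)
    then have "(1 - 2 / omega) / ((1 - 1 / omega + ln omega + 2 / real k)^2 * real k) \<le> 0"
      by (intro divide_nonpos_nonneg) auto
    also have "0 \<le> 1 / (9.027901 * real k)"
      by simp
    also note first
    finally show ?thesis .
  qed
  with first show ?thesis
    by simp
qed

end
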